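(* Consider generating measures $\mathcal{W}_1(P, \ell)$ and $\mathcal{W}_k(P, \ell)$, which are parameterized by the same probability matrix $P$ and lengths $\ell$ but different recursion depths. Let graphs $H_1, \ldots, H_k \sim \mathcal{W}_1(P, \ell)$ be independently drawn, and denote $H_i = (V, E_i)$, with nodes labelled arbitrarily. Then the intersection graph $G = (V, \cap_{i=1}^{k} E_i) = (V, E_G) \sim \mathcal{W}_k(P, \ell)$.
   Context: Multifractal network generator (MFNG): a generating measure $\mathcal{W}_k(P, \ell)$ consists of an $m$-vector of lengths $\ell$ with $\sum_{i=1}^m \ell_i = 1$, a symmetric $m \times m$ matrix $P = (p_{ij})$ with entries in $[0,1]$, and a recursion depth $k$. The indices $1,\ldots,m$ are called categories. An undirected graph $G=(V,E)$ on $N$ nodes is distributed according to $\mathcal{W}_k(P,\ell)$ if it is generated as follows: (1) partition $[0,1]$ into $m$ subintervals of lengths $\ell_1,\ldots,\ell_m$, and recursively partition each subinterval into $m$ pieces with relative lengths $\ell_i$, to depth $k$, giving $m^k$ intervals $\ell_{i_1,\ldots,i_k}$ of length $\prod_{r=1}^k \ell_{i_r}$; (2) sample $N$ points uniformly and independently from $[0,1]$ as the nodes $x_1,\ldots,x_N$, each identified by its $k$-tuple of categories $c(x_i) = (i_1,\ldots,i_k)$ according to which nested intervals it falls into; (3) for every pair of nodes with category tuples $(i_1,\ldots,i_k)$ and $(j_1,\ldots,j_k)$, independently add the edge with probability $\prod_{r=1}^k p_{i_r j_r}$. In particular, a node's category tuple equals $(c_1,\ldots,c_k)$ with probability $\prod_{r=1}^k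 \ell_{c_r}$. *)

theory Defs
  imports "HOL-Probability.Probability"
begin

definition cat_pmf :: "nat \<Rightarrow> (nat \<Rightarrow> real) \<Rightarrow> nat pmf" where
  "cat_pmf m l = embed_pmf (\<lambda>i. if i < m then l i else 0)"

text \<open>Node set is {0..<N}; an undirected edge is stored as an ordered pair (a,b) with a < b < N.\<close>
definition node_pairs :: "nat \<Rightarrow> (nat \<times> nat) set" where
  "node_pairs N = {(a, b). a < b \<and> b < N}"

definition tuple_pmf :: "nat \<Rightarrow> (nat \<Rightarrow> real) \<Rightarrow> nat \<Rightarrow> (nat \<Rightarrow> nat) pmf" where
  "tuple_pmf m l k = Pi_pmf {..<k} 0 (\<lambda>_. cat_pmf m l)"

definition edge_prob :: "(nat \<Rightarrow> nat \<Rightarrow> real) \<Rightarrow> nat \<Rightarrow> (nat \<Rightarrow> nat) \<Rightarrow> (nat \<Rightarrow> nat) \<Rightarrow> real" where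
  "edge_prob P k c d = (\<Prod>r<k. P (c r) (d r))"

definition mfng_pmf :: "nat \<Rightarrow> nat \<Rightarrow> (nat \<Rightarrow> real) \<Rightarrow> (nat \<Rightarrow> nat \<Rightarrow> real) \<Rightarrow> nat
    \<Rightarrow> (nat \<times> nat) set pmf" where
  "mfng_pmf N m l P k =
     do {
       cs \<leftarrow> Pi_pmf {..<N} (\<lambda>_. 0) (\<lambda>_. tuple_pmf m l k);
       b \<leftarrow> Pi_pmf (node_pairs N) False
              (\<lambda>(x, y). bernoulli_pmf (edge_prob P k (cs x) (cs y)));
       return_pmf {e \<in> node_pairs N. b e}
     }"

end

theory Submission
  imports Defs
begin

text \<open>Conditionally on the categories, an MFNG graph keeps each node pair independently with
  probability a product of entries of P. Intersecting independent graphs multiplies these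
  probabilities, so conditionally on the categories of all k depth-1 graphs the intersection
  keeps pair (x,y) with probability \<open>\<Prod>i<k. P (c_i x) (c_i y)\<close>. Transposing the k independent
  category assignments of the N nodes turns them into N independent k-tuples of categories,
  which is exactly the depth-k category distribution.\<close>

definition random_subset_pmf :: "'a set \<Rightarrow> ('a \<Rightarrow> real) \<Rightarrow> 'a set pmf" where
  "random_subset_pmf A p = map_pmf (\<lambda>b. {e \<in> A. b e}) (Pi_pmf A False (\<lambda>e. bernoulli_pmf (p e)))"

lemma pmf_Pi_pmf_Pi_pmf:
  assumes "finite A" "finite B"
  shows "pmf (Pi_pmf A (\<lambda>_. d) (\<lambda>i. Pi_pmf B d (p i))) g =
    (if \<forall>i j. i \<notin> A \<or> j \<notin> B \<longrightarrow> g i j = d then \<Prod>i\<in>A. \<Prod>j\<in>B. pmf (p i j) (g i j) else 0)"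
proof (cases "\<forall>i j. i \<notin> A \<or> j \<notin> B \<longrightarrow> g i j = d")
  case True
  then show ?thesis using assms
    by (subst pmf_Pi') (auto simp: pmf_Pi' intro!: prod.cong)
next
  case outside: False
  then obtain i j where ij: "i \<notin> A \<or> j \<notin> B" "g i j \<noteq> d" by blast
  show ?thesis
  proof (cases "i \<in> A")
    case True
    with ij have "pmf (Pi_pmf B d (p i)) (g i) = 0"
      using assms by (intro pmf_Pi_outside) auto
    then have "(\<Prod>i\<in>A. pmf (Pi_pmf B d (p i)) (g i)) = 0"
      using assms True by (intro prod_zero) auto
    then show ?thesis using outside assms by (subst pmf_Pi) auto
  next
    case False
    then show ?thesis using outside ij assms by (subst pmf_Pi_outside) (auto simp: fun_eq_iff)
  qed
qed

lemma Pi_pmf_transpose: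
  assumes "finite A" "finite B"
  shows "map_pmf (\<lambda>g j i. g i j) (Pi_pmf A (\<lambda>_. d) (\<lambda>i. Pi_pmf B d (p i)))
       = Pi_pmf B (\<lambda>_. d) (\<lambda>j. Pi_pmf A d (\<lambda>i. p i j))"
proof (rule pmf_eqI)
  fix h :: "'b \<Rightarrow> 'a \<Rightarrow> 'c"
  have "inj (\<lambda>(g :: 'a \<Rightarrow> 'b \<Rightarrow> 'c) j i. g i j)"
    by (auto simp: inj_def fun_eq_iff)
  from pmf_map_inj'[OF this, of _ "\<lambda>i j. h j i"]
  have "pmf (map_pmf (\<lambda>g j i. g i j) (Pi_pmf A (\<lambda>_. d) (\<lambda>i. Pi_pmf B d (p i)))) h
      = pmf (Pi_pmf A (\<lambda>_. d) (\<lambda>i. Pi_pmf B d (p i))) (\<lambda>i j. h j i)"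
    by simp
  also have "\<dots> = pmf (Pi_pmf B (\<lambda>_. d) (\<lambda>j. Pi_pmf A d (\<lambda>i. p i j))) h"
    using assms by (auto simp: pmf_Pi_pmf_Pi_pmf prod.swap[of _ A B])
  finally show "pmf (map_pmf (\<lambda>g j i. g i j) (Pi_pmf A (\<lambda>_. d) (\<lambda>i. Pi_pmf B d (p i)))) h
      = pmf (Pi_pmf B (\<lambda>_. d) (\<lambda>j. Pi_pmf A d (\<lambda>i. p i j))) h" .
qed

lemma Pi_pmf_bernoulli_all:
  assumes "finite A" "\<And>i. i \<in> A \<Longrightarrow> 0 \<le> p i \<and> p i \<le> 1"
  shows "map_pmf (\<lambda>b. \<forall>i\<in>A. b i) (Pi_pmf A False (\<lambda>i. bernoulli_pmf (p i)))
       = bernoulli_pmf (\<Prod>i\<in>A. p i)"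
proof (rule pmf_eqI)
  fix x :: bool
  let ?M = "Pi_pmf A False (\<lambda>i. bernoulli_pmf (p i))" and ?all = "{b. \<forall>i\<in>A. b i}"
  have bounds: "0 \<le> (\<Prod>i\<in>A. p i)" "(\<Prod>i\<in>A. p i) \<le> 1"
    using assms by (auto intro: prod_nonneg prod_le_1)
  have "?all = Pi A (\<lambda>_. {True})" by (auto simp: Pi_def)
  then have "measure_pmf.prob ?M ?all = (\<Prod>i\<in>A. measure_pmf.prob (bernoulli_pmf (p i)) {True})"
    using assms(1) by (simp add: measure_Pi_pmf_Pi)
  also have "\<dots> = (\<Prod>i\<in>A. p i)"
    using assms by (intro prod.cong) (auto simp: measure_pmf_single)
  finally have prob_all: "measure_pmf.prob ?M ?all = (\<Prod>i\<in>A. p i)" .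
  have "(\<lambda>b. \<forall>i\<in>A. b i) -` {True} = ?all" "(\<lambda>b. \<forall>i\<in>A. b i) -` {False} = UNIV - ?all"
    by auto
  then show "pmf (map_pmf (\<lambda>b. \<forall>i\<in>A. b i) ?M) x = pmf (bernoulli_pmf (\<Prod>i\<in>A. p i)) x"
    using bounds prob_all measure_pmf.prob_compl[of ?all ?M]
    by (cases x) (simp_all add: pmf_map)
qed

lemma Inter_Pi_random_subset_pmf:
  assumes "finite A" "finite K" "K \<noteq> {}"
    and "\<And>i e. i \<in> K \<Longrightarrow> e \<in> A \<Longrightarrow> 0 \<le> p i e \<and> p i e \<le> 1"
  shows "map_pmf (\<lambda>S. \<Inter>i\<in>K. S i) (Pi_pmf K {} (\<lambda>i. random_subset_pmf A (p i)))
       = random_subset_pmf A (\<lambda>e. \<Prod>i\<in>K. p i e)"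
proof -
  let ?sel = "\<lambda>b. {e \<in> A. b e}"
  let ?B = "\<lambda>e i. bernoulli_pmf (p i e)"
  have Inter_select: "(\<Inter>i\<in>K. {e \<in> A. g e i}) = {e \<in> A. \<forall>i\<in>K. g e i}" for g
    using assms(3) by auto
  have "Pi_pmf K {} (\<lambda>i. random_subset_pmf A (p i))
      = map_pmf (\<lambda>BB. ?sel \<circ> BB) (Pi_pmf K (\<lambda>_. False) (\<lambda>i. Pi_pmf A False (\<lambda>e. ?B e i)))"
    unfolding random_subset_pmf_def using assms(2) by (rule Pi_pmf_map) simp
  also have "Pi_pmf K (\<lambda>_. False) (\<lambda>i. Pi_pmf A False (\<lambda>e. ?B e i))
      = map_pmf (\<lambda>g i e. g e i) (Pi_pmf A (\<lambda>_. False) (\<lambda>e. Pi_pmf K False (?B e)))"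
    using Pi_pmf_transpose[OF assms(1,2), of False ?B] by simp
  finally have "map_pmf (\<lambda>S. \<Inter>i\<in>K. S i) (Pi_pmf K {} (\<lambda>i. random_subset_pmf A (p i)))
      = map_pmf ?sel (map_pmf (\<lambda>g. (\<lambda>v. \<forall>i\<in>K. v i) \<circ> g)
          (Pi_pmf A (\<lambda>_. False) (\<lambda>e. Pi_pmf K False (?B e))))"
    using Inter_select by (simp add: pmf.map_comp o_def)
  also have "map_pmf (\<lambda>g. (\<lambda>v. \<forall>i\<in>K. v i) \<circ> g) (Pi_pmf A (\<lambda>_. False) (\<lambda>e. Pi_pmf K False (?B e)))
      = Pi_pmf A False (\<lambda>e. map_pmf (\<lambda>v. \<forall>i\<in>K. v i) (Pi_pmf K False (?B e)))"
    using assms(1,3) by (intro Pi_pmf_map[symmetric]) auto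
  also have "\<dots> = Pi_pmf A False (\<lambda>e. bernoulli_pmf (\<Prod>i\<in>K. p i e))"
    using assms(2,4) by (intro Pi_pmf_cong refl Pi_pmf_bernoulli_all) auto
  finally show ?thesis unfolding random_subset_pmf_def .
qed

lemma set_pmf_Pi_pmf_range:
  assumes "finite A" "d \<in> S" "\<And>x. x \<in> A \<Longrightarrow> set_pmf (p x) \<subseteq> S" "f \<in> set_pmf (Pi_pmf A d p)"
  shows "f x \<in> S"
  using assms set_Pi_pmf_subset'[OF assms(1), of d p] by (cases "x \<in> A") (auto simp: PiE_dflt_def)

lemma set_pmf_cat_pmf:
  assumes "\<And>i. i < m \<Longrightarrow> l i \<ge> 0" "(\<Sum>i<m. l i) = 1"
  shows "set_pmf (cat_pmf m l) \<subseteq> {..<m}"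
proof -
  let ?f = "\<lambda>i. if i < m then l i else 0"
  have "(\<integral>\<^sup>+x. ennreal (?f x) \<partial>count_space UNIV) = (\<integral>\<^sup>+x. ennreal (l x) \<partial>count_space {..<m})"
    by (auto simp: nn_integral_count_space_indicator indicator_def intro!: nn_integral_cong)
  also have "\<dots> = ennreal (\<Sum>i<m. l i)"
    using assms(1) by (simp add: nn_integral_count_space_finite) (subst sum_ennreal; simp)
  also have "\<dots> = 1"
    using assms(2) by simp
  finally show ?thesis
    unfolding cat_pmf_def using assms(1) by (subst set_embed_pmf) auto
qed

lemma set_pmf_category_tuples:
  fixes N k :: nat
  assumes "\<And>i. i < m \<Longrightarrow> l i \<ge> 0" "(\<Sum>i<m. l i) = 1"
    and "G \<in> set_pmf (Pi_pmf {..<N} (\<lambda>_. 0) (\<lambda>_. Pi_pmf {..<k} 0 (\<lambda>_. cat_pmf m l)))"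
  shows "G x r < m"
proof -
  have "0 < m" using assms(2) by (cases m) auto
  have tuple_range: "\<forall>r. c r < m" if "c \<in> set_pmf (Pi_pmf {..<k} 0 (\<lambda>_. cat_pmf m l))" for c
    using set_pmf_Pi_pmf_range[of "{..<k}" 0 "{..<m}" "\<lambda>_. cat_pmf m l" c] \<open>0 < m\<close> that
      set_pmf_cat_pmf[OF assms(1,2)] by auto
  show ?thesis
    using set_pmf_Pi_pmf_range[of "{..<N}" "\<lambda>_. 0" "{c. \<forall>r. c r < m}", OF _ _ _ assms(3)]
      tuple_range \<open>0 < m\<close> by auto
qed

lemma finite_node_pairs: "finite (node_pairs N)"
  by (rule finite_subset[of _ "{..<N} \<times> {..<N}"]) (auto simp: node_pairs_def)

lemma mfng_pmf_eq_bind: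
  "mfng_pmf N m l P k =
     Pi_pmf {..<N} (\<lambda>_. 0) (\<lambda>_. Pi_pmf {..<k} 0 (\<lambda>_. cat_pmf m l)) \<bind>
       (\<lambda>cs. random_subset_pmf (node_pairs N) (\<lambda>(x, y). \<Prod>r<k. P (cs x r) (cs y r)))"
  by (simp add: mfng_pmf_def tuple_pmf_def edge_prob_def random_subset_pmf_def map_pmf_def
      case_prod_beta')

lemma mfng_pmf_depth_one:
  "mfng_pmf N m l P 1 =
     Pi_pmf {..<N} 0 (\<lambda>_. cat_pmf m l) \<bind>
       (\<lambda>c. random_subset_pmf (node_pairs N) (\<lambda>(x, y). P (c x) (c y)))"
proof -
  let ?tuple = "\<lambda>(a :: nat) (r :: nat). if r = 0 then a else 0"
  have "Pi_pmf {..<1} 0 (\<lambda>_. cat_pmf m l) = map_pmf ?tuple (cat_pmf m l)"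
    by (simp add: lessThan_Suc Pi_pmf_singleton)
  then have "Pi_pmf {..<N} (\<lambda>_. 0) (\<lambda>_. Pi_pmf {..<1} 0 (\<lambda>_. cat_pmf m l))
      = map_pmf (\<lambda>c. ?tuple \<circ> c) (Pi_pmf {..<N} 0 (\<lambda>_. cat_pmf m l))"
    by (simp add: Pi_pmf_map fun_eq_iff)
  then show ?thesis
    by (simp add: mfng_pmf_eq_bind bind_map_pmf)
qed

theorem lemma1:
  fixes N m k :: nat and l :: "nat \<Rightarrow> real" and P :: "nat \<Rightarrow> nat \<Rightarrow> real"
  assumes "k \<ge> 1"
    and "\<And>i. i < m \<Longrightarrow> l i \<ge> 0"
    and "(\<Sum>i<m. l i) = 1"
    and "\<And>i j. i < m \<Longrightarrow> j < m \<Longrightarrow> P i j = P j i"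
    and "\<And>i j. i < m \<Longrightarrow> j < m \<Longrightarrow> 0 \<le> P i j \<and> P i j \<le> 1"
  shows "map_pmf (\<lambda>Hs. \<Inter>i\<in>{..<k}. Hs i)
           (Pi_pmf {..<k} {} (\<lambda>_. mfng_pmf N m l P 1))
         = mfng_pmf N m l P k"
proof -
  let ?cat = "cat_pmf m l" and ?E = "node_pairs N" and ?Inter = "\<lambda>S. \<Inter>i\<in>{..<k}. S i"
  let ?G = "Pi_pmf {..<N} (\<lambda>_. 0) (\<lambda>_. Pi_pmf {..<k} 0 (\<lambda>_. ?cat))"
  let ?graphs = "\<lambda>cs. Pi_pmf {..<k} {} (\<lambda>i. random_subset_pmf ?E (\<lambda>(x, y). P (cs i x) (cs i y)))"
  have "map_pmf ?Inter (Pi_pmf {..<k} {} (\<lambda>_. mfng_pmf N m l P 1))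
      = Pi_pmf {..<k} (\<lambda>_. 0) (\<lambda>_. Pi_pmf {..<N} 0 (\<lambda>_. ?cat)) \<bind> (\<lambda>cs. map_pmf ?Inter (?graphs cs))"
    unfolding mfng_pmf_depth_one by (simp add: Pi_pmf_bind[where d' = "\<lambda>_. 0"] map_bind_pmf)
  also have "\<dots> = ?G \<bind> (\<lambda>G. map_pmf ?Inter (?graphs (\<lambda>i x. G x i)))"
    by (subst Pi_pmf_transpose[of "{..<N}" "{..<k}" 0 "\<lambda>_ _. ?cat", symmetric])
      (simp_all add: bind_map_pmf)
  also have "\<dots> = ?G \<bind> (\<lambda>G. random_subset_pmf ?E (\<lambda>(x, y). \<Prod>r<k. P (G x r) (G y r)))"
  proof (rule bind_pmf_cong[OF refl])
    fix G assume "G \<in> set_pmf ?G"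
    then have "G x r < m" for x r
      using set_pmf_category_tuples[OF assms(2,3)] by blast
    then show "map_pmf ?Inter (?graphs (\<lambda>i x. G x i))
        = random_subset_pmf ?E (\<lambda>(x, y). \<Prod>r<k. P (G x r) (G y r))"
      using assms(1,5) finite_node_pairs
        Inter_Pi_random_subset_pmf[of ?E "{..<k}" "\<lambda>i (x, y). P (G x i) (G y i)"]
      by (simp add: case_prod_beta' lessThan_empty_iff)
  qed
  also have "\<dots> = mfng_pmf N m l P k"
    by (simp add: mfng_pmf_eq_bind)
  finally show ?thesis .
qed

end
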